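(* $\mathcal{S}$ is a separating class for $SG(\mathbb{R})$: for every $f\in SG(\mathbb{R})$ and every $\phi\in\mathcal{S}$ the function $f\phi$ is piecewise continuous and absolutely integrable on $\mathbb{R}$, and if $f,g\in SG(\mathbb{R})$ satisfy $\int_{-\infty}^\infty f(x)\phi(x)\,dx=\int_{-\infty}^\infty g(x)\phi(x)\,dx$ for all $\phi\in\mathcal{S}$, then $f(x)=g(x)$ for all $x\in\mathbb{R}$.
   Context: A function $f:\mathbb{R}\to\mathbb{C}$ is piecewise continuous if on each bounded subinterval it is continuous except at finitely many points, at which it has finite one-sided limits. $PC_{bj}$ is the set of piecewise continuous $f:\mathbb{R}\to\mathbb{C}$ satisfying $f(x)=\tfrac12\big(f(x+)+f(x-)\big)$ for every $x\in\mathbb{R}$. $SG(\mathbb{R})$ is the set of $f\in PC_{bj}$ for which there exist constants $C>0$ and $N\in\mathbb{N}$ with $\int_{-R}^{R}|f(x)|\,dx\le C(1+R)^N$ for all $R>0$. $\mathcal{S}$ (the Schwartz class) is the set of infinitely differentiable $\phi:\mathbb{R}\to\mathbb{C}$ with $\lim_{x\to\pm\infty}x^m\phi^{(n)}(x)=0$ for all integers $m,n\ge 0$. *)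

theory Defs
  imports "HOL-Analysis.Analysis"
begin

definition piecewise_cont :: "(real \<Rightarrow> complex) \<Rightarrow> bool" where
  "piecewise_cont f \<longleftrightarrow>
     (\<forall>a b. \<exists>D. finite D \<and> D \<subseteq> {a..b} \<and>
        (\<forall>x\<in>{a..b} - D. isCont f x) \<and>
        (\<forall>x\<in>D. (\<exists>l. (f \<longlongrightarrow> l) (at_left x)) \<and> (\<exists>l. (f \<longlongrightarrow> l) (at_right x))))"

definition PC_bj :: "(real \<Rightarrow> complex) set" where
  "PC_bj = {f. piecewise_cont f \<and>
      (\<forall>x. f x = (Lim (at_right x) f + Lim (at_left x) f) / 2)}"

definition SG :: "(real \<Rightarrow> complex) set" where
  "SG = {f. f \<in> PC_bj \<and>
      (\<exists>C>0. \<exists>N::nat. \<forall>R>0. integral {-R..R} (\<lambda>x. norm (f x)) \<le> C * (1 + R) ^ N)}"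

definition nderiv :: "nat \<Rightarrow> (real \<Rightarrow> complex) \<Rightarrow> real \<Rightarrow> complex" where
  "nderiv n = ((\<lambda>g x. vector_derivative g (at x)) ^^ n)"

definition Schwartz :: "(real \<Rightarrow> complex) set" where
  "Schwartz = {\<phi>. (\<forall>n x. nderiv n \<phi> differentiable (at x)) \<and>
      (\<forall>m n. ((\<lambda>x. complex_of_real (x ^ m) * nderiv n \<phi> x) \<longlongrightarrow> 0) at_top \<and>
             ((\<lambda>x. complex_of_real (x ^ m) * nderiv n \<phi> x) \<longlongrightarrow> 0) at_bot)}"

end

theory Submission
  imports Defs "HOL-Computational_Algebra.Polynomial" "HOL-Probability.Distributions"
    "HOL-Real_Asymp.Real_Asymp"
begin

(* The product f phi is piecewise continuous because phi is continuous. It is absolutely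
   integrable because on the shell k <= |t| <= k + 1 the bound |phi t| <= B (1 + |t|)^-(N+2) of a
   Schwartz function beats the growth C (k + 2)^N of the L1 norm of f, so the shell contributes
   O(1 / (k + 1)^2).

   For separation, h = f - g integrates to zero against every Gaussian exp (-(a (t - x))^2),
   which is a Schwartz function. Substituting t = x + s / a, a times this integral is the integral
   of exp (-s^2) h (x + s / a), which tends to sqrt pi / 2 (h (x-) + h (x+)) as a tends to
   infinity: near x, where h is bounded, by dominated convergence; away from x because there the
   Gaussian weight is at most exp (-(a^2 - 1) d^2) times the weight for a = 1. Hence
   h (x-) + h (x+) = 0, and since f and g take the mean of their one-sided limits, f x = g x. *)

section \<open>Piecewise continuous functions\<close>

lemma piecewise_contE:
  assumes "piecewise_cont f"
  obtains D where "finite D" "D \<subseteq> {a..b}" "\<And>x. x \<in> {a..b} - D \<Longrightarrow> isCont f x"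
    "\<And>x. x \<in> D \<Longrightarrow> (\<exists>l. (f \<longlongrightarrow> l) (at_left x)) \<and> (\<exists>l. (f \<longlongrightarrow> l) (at_right x))"
  using assms unfolding piecewise_cont_def by meson

lemma piecewise_cont_one_sided_limits:
  assumes "piecewise_cont f"
  shows "\<exists>l. (f \<longlongrightarrow> l) (at_left x)" "\<exists>l. (f \<longlongrightarrow> l) (at_right x)"
proof -
  obtain D where "finite D" "D \<subseteq> {x..x}" "\<And>y. y \<in> {x..x} - D \<Longrightarrow> isCont f y"
    "\<And>y. y \<in> D \<Longrightarrow> (\<exists>l. (f \<longlongrightarrow> l) (at_left y)) \<and> (\<exists>l. (f \<longlongrightarrow> l) (at_right y))"
    using piecewise_contE[OF assms, of x x] by metis
  then have "isCont f x \<or> (\<exists>l. (f \<longlongrightarrow> l) (at_left x)) \<and> (\<exists>l. (f \<longlongrightarrow> l) (at_right x))"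
    by (cases "x \<in> D") auto
  then show "\<exists>l. (f \<longlongrightarrow> l) (at_left x)" "\<exists>l. (f \<longlongrightarrow> l) (at_right x)"
    by (auto simp: isCont_def filterlim_at_split)
qed

lemma continuous_imp_piecewise_cont:
  assumes "\<And>x. isCont f x"
  shows "piecewise_cont f"
  unfolding piecewise_cont_def using assms by (intro allI exI[of _ "{}"]) auto

lemma piecewise_cont_mult:
  assumes f: "piecewise_cont f" and g: "piecewise_cont g"
  shows "piecewise_cont (\<lambda>x. f x * g x)"
  unfolding piecewise_cont_def
proof (intro allI)
  fix a b
  obtain Df where Df: "finite Df" "Df \<subseteq> {a..b}" "\<And>x. x \<in> {a..b} - Df \<Longrightarrow> isCont f x"
    using piecewise_contE[OF f] by metis
  obtain Dg where Dg: "finite Dg" "Dg \<subseteq> {a..b}" "\<And>x. x \<in> {a..b} - Dg \<Longrightarrow> isCont g x"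
    using piecewise_contE[OF g] by metis
  have "\<exists>l. ((\<lambda>x. f x * g x) \<longlongrightarrow> l) F" if F: "F = at_left x \<or> F = at_right x" for x F
  proof -
    obtain lf lg where "(f \<longlongrightarrow> lf) F" "(g \<longlongrightarrow> lg) F"
      using F piecewise_cont_one_sided_limits[OF f, of x] piecewise_cont_one_sided_limits[OF g, of x]
      by blast
    then show ?thesis by (blast intro: tendsto_mult)
  qed
  then show "\<exists>D. finite D \<and> D \<subseteq> {a..b} \<and> (\<forall>x\<in>{a..b} - D. isCont (\<lambda>x. f x * g x) x) \<and>
      (\<forall>x\<in>D. (\<exists>l. ((\<lambda>x. f x * g x) \<longlongrightarrow> l) (at_left x)) \<and> (\<exists>l. ((\<lambda>x. f x * g x) \<longlongrightarrow> l) (at_right x)))"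
    using Df Dg by (intro exI[of _ "Df \<union> Dg"]) (auto intro: isCont_mult)
qed

lemma one_sided_limits_imp_bounded_near:
  fixes h :: "real \<Rightarrow> 'a::real_normed_vector"
  assumes "(h \<longlongrightarrow> l) (at_left x)" "(h \<longlongrightarrow> r) (at_right x)"
  shows "\<exists>d>0. \<exists>B. \<forall>t\<in>ball x d. norm (h t) \<le> B"
proof -
  define B where "B = max (norm (h x)) (max (norm l) (norm r) + 1)"
  have "eventually (\<lambda>t. norm (h t) < norm l + 1) (at_left x)"
       "eventually (\<lambda>t. norm (h t) < norm r + 1) (at_right x)"
    using assms by (auto intro: order_tendstoD tendsto_norm)
  then have "eventually (\<lambda>t. norm (h t) \<le> B) (at x)"
    unfolding eventually_at_split B_def by (auto elim: eventually_mono)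
  then obtain d where "d > 0" "\<And>t. t \<noteq> x \<Longrightarrow> dist t x < d \<Longrightarrow> norm (h t) \<le> B"
    unfolding eventually_at by blast
  moreover have "norm (h x) \<le> B"
    by (simp add: B_def)
  ultimately show ?thesis
    by (metis dist_commute mem_ball)
qed

lemma piecewise_cont_bounded_on_interval:
  assumes "piecewise_cont f"
  obtains B where "\<And>t. t \<in> {a..b} \<Longrightarrow> norm (f t) \<le> B"
proof -
  have "\<forall>x. \<exists>d>0. \<exists>B. \<forall>t\<in>ball x d. norm (f t) \<le> B"
    using piecewise_cont_one_sided_limits[OF assms] one_sided_limits_imp_bounded_near by metis
  then obtain d B where d: "\<And>x. d x > 0" and B: "\<And>x t. t \<in> ball x (d x) \<Longrightarrow> norm (f t) \<le> B x"
    by (metis choice_iff)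
  have "{a..b} \<subseteq> (\<Union>x\<in>{a..b}. ball x (d x))"
    using d by force
  then obtain C where C: "C \<subseteq> {a..b}" "finite C" "{a..b} \<subseteq> (\<Union>x\<in>C. ball x (d x))"
    using compactE_image[of "{a..b}" "{a..b}" "\<lambda>x. ball x (d x)"] by auto
  have "norm (f t) \<le> Max (B ` C)" if "t \<in> {a..b}" for t
  proof -
    from that C(3) obtain x where "x \<in> C" "t \<in> ball x (d x)" by blast
    then show ?thesis using B C(2) by (meson Max_ge finite_imageI image_eqI order.trans)
  qed
  then show ?thesis using that by blast
qed

lemma piecewise_cont_absolutely_integrable_on_interval:
  assumes "piecewise_cont f"
  shows "f absolutely_integrable_on {a..b}"
proof -
  obtain D where D: "finite D" "\<And>x. x \<in> {a..b} - D \<Longrightarrow> isCont f x"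
    using piecewise_contE[OF assms] by metis
  have "{a..b} - D \<in> sets lebesgue"
    using D(1) by (simp add: negligible_finite negligible_imp_sets sets.Diff)
  moreover have "continuous_on ({a..b} - D) f"
    using D(2) by (simp add: continuous_at_imp_continuous_on)
  ultimately have "f measurable_on ({a..b} - D)"
    by (simp add: continuous_imp_measurable_on_sets_lebesgue measurable_on_iff_borel_measurable)
  moreover have "negligible (({a..b} - D - {a..b}) \<union> ({a..b} - ({a..b} - D)))"
    by (rule negligible_subset[of D]) (use D(1) in auto)
  ultimately have "f measurable_on {a..b}"
    by (rule measurable_on_spike_set)
  then have "f \<in> borel_measurable (lebesgue_on {a..b})"
    by (simp add: measurable_on_iff_borel_measurable)
  moreover obtain B where "\<And>t. t \<in> {a..b} \<Longrightarrow> norm (f t) \<le> B"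
    using piecewise_cont_bounded_on_interval[OF assms, of a b] by blast
  ultimately show ?thesis
    by (intro measurable_bounded_by_integrable_imp_absolutely_integrable[where g = "\<lambda>_. B"]) auto
qed

lemma PC_bj_value:
  assumes "f \<in> PC_bj" "(f \<longlongrightarrow> l) (at_left x)" "(f \<longlongrightarrow> r) (at_right x)"
  shows "f x = (r + l) / 2"
proof -
  have "Lim (at_left x) f = l" "Lim (at_right x) f = r"
    using assms(2,3) by (simp_all add: tendsto_Lim)
  then show ?thesis
    using assms(1) unfolding PC_bj_def by simp
qed

lemma PC_bj_piecewise_cont: "f \<in> PC_bj \<Longrightarrow> piecewise_cont f"
  by (simp add: PC_bj_def)

lemma SG_PC_bj: "f \<in> SG \<Longrightarrow> f \<in> PC_bj"
  by (simp add: SG_def)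

section \<open>Decay of Schwartz functions\<close>

lemma nderiv_0 [simp]: "nderiv 0 \<phi> = \<phi>"
  by (simp add: nderiv_def)

lemma nderiv_Suc: "nderiv (Suc n) \<phi> = (\<lambda>x. vector_derivative (nderiv n \<phi>) (at x))"
  by (simp add: nderiv_def)

lemma Schwartz_isCont:
  assumes "\<phi> \<in> Schwartz"
  shows "isCont \<phi> x"
proof -
  have "nderiv 0 \<phi> differentiable (at x)"
    using assms unfolding Schwartz_def by blast
  then show ?thesis
    by (simp add: differentiable_imp_continuous_within)
qed

lemma Schwartz_moment_tendsto_zero:
  assumes "\<phi> \<in> Schwartz" and "F = at_top \<or> F = at_bot"
  shows "((\<lambda>x. complex_of_real (x ^ m) * \<phi> x) \<longlongrightarrow> 0) F"
proof -
  have "((\<lambda>x. complex_of_real (x ^ m) * nderiv 0 \<phi> x) \<longlongrightarrow> 0) at_top \<and>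
        ((\<lambda>x. complex_of_real (x ^ m) * nderiv 0 \<phi> x) \<longlongrightarrow> 0) at_bot"
    using assms(1) unfolding Schwartz_def by blast
  then show ?thesis
    using assms(2) by auto
qed

lemma continuous_vanishing_at_infinity_bounded:
  fixes g :: "real \<Rightarrow> 'a::real_normed_vector"
  assumes "\<And>x. isCont g x" and "(g \<longlongrightarrow> 0) at_top" and "(g \<longlongrightarrow> 0) at_bot"
  obtains B where "\<And>t. norm (g t) \<le> B"
proof -
  have "eventually (\<lambda>t. norm (g t) < 1) at_top" "eventually (\<lambda>t. norm (g t) < 1) at_bot"
    using assms(2,3) by (auto intro: order_tendstoD tendsto_norm_zero)
  then obtain T1 T2 where T: "\<And>t. t \<ge> T1 \<Longrightarrow> norm (g t) < 1" "\<And>t. t \<le> T2 \<Longrightarrow> norm (g t) < 1"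
    unfolding eventually_at_top_linorder eventually_at_bot_linorder by blast
  have "compact (g ` {T2..T1})"
    using assms(1) by (intro compact_continuous_image continuous_at_imp_continuous_on) auto
  then obtain K where K: "\<And>t. t \<in> {T2..T1} \<Longrightarrow> norm (g t) \<le> K"
    by (meson compact_imp_bounded bounded_iff imageI)
  have "norm (g t) \<le> max K 1" for t
    using T[of t] K[of t] by (cases "t \<in> {T2..T1}") auto
  then show ?thesis using that by blast
qed

lemma one_plus_abs_power_le: "(1 + \<bar>t::real\<bar>) ^ M \<le> 2 ^ M * (1 + \<bar>t\<bar> ^ M)"
proof -
  have "(1 + \<bar>t\<bar>) ^ M \<le> (2 * max 1 \<bar>t\<bar>) ^ M"
    by (intro power_mono) auto
  also have "\<dots> = 2 ^ M * max 1 \<bar>t\<bar> ^ M"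
    by (simp add: power_mult_distrib)
  also have "\<dots> \<le> 2 ^ M * (1 + \<bar>t\<bar> ^ M)"
    by (cases "1 \<le> \<bar>t\<bar>") (auto simp: max_def)
  finally show ?thesis .
qed

lemma Schwartz_polynomial_decay:
  assumes "\<phi> \<in> Schwartz"
  obtains B where "\<And>t. (1 + \<bar>t\<bar>) ^ M * norm (\<phi> t) \<le> B"
proof -
  have bounded: "\<exists>B. \<forall>t. norm (complex_of_real (t ^ m) * \<phi> t) \<le> B" for m
  proof -
    have "isCont (\<lambda>t. complex_of_real (t ^ m) * \<phi> t) x" for x
      using Schwartz_isCont[OF assms] by (intro continuous_intros)
    then obtain B where "\<And>t. norm (complex_of_real (t ^ m) * \<phi> t) \<le> B"
      by (rule continuous_vanishing_at_infinity_bounded)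
        (use Schwartz_moment_tendsto_zero[OF assms] in auto)
    then show ?thesis by blast
  qed
  obtain B0 BM where B0: "\<And>t. norm (\<phi> t) \<le> B0" and BM: "\<And>t. \<bar>t\<bar> ^ M * norm (\<phi> t) \<le> BM"
    using bounded[of 0] bounded[of M] by (auto simp: norm_mult norm_power)
  have "(1 + \<bar>t\<bar>) ^ M * norm (\<phi> t) \<le> 2 ^ M * (B0 + BM)" for t
  proof -
    have "(1 + \<bar>t\<bar>) ^ M * norm (\<phi> t) \<le> 2 ^ M * (1 + \<bar>t\<bar> ^ M) * norm (\<phi> t)"
      by (intro mult_right_mono one_plus_abs_power_le) simp
    also have "\<dots> = 2 ^ M * (norm (\<phi> t) + \<bar>t\<bar> ^ M * norm (\<phi> t))"
      by (simp add: algebra_simps)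
    also have "\<dots> \<le> 2 ^ M * (B0 + BM)"
      using B0[of t] BM[of t] by (intro mult_left_mono) auto
    finally show ?thesis .
  qed
  then show ?thesis using that by blast
qed

section \<open>Absolute integrability of products with Schwartz functions\<close>

lemma eventually_mem_symmetric_interval: "eventually (\<lambda>k. t \<in> {-real k..real k}) sequentially"
proof -
  obtain n where "\<bar>t\<bar> \<le> real n"
    using real_arch_simple by blast
  then show ?thesis
    unfolding eventually_sequentially by (intro exI[of _ n]) auto
qed

lemma absolutely_integrable_on_UNIV_if_bounded_on_intervals:
  fixes F :: "real \<Rightarrow> 'a::euclidean_space"
  assumes int: "\<And>k::nat. F absolutely_integrable_on {-real k..real k}"
    and bound: "\<And>k::nat. integral {-real k..real k} (\<lambda>t. norm (F t)) \<le> B"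
  shows "F absolutely_integrable_on UNIV"
proof -
  define G where "G k t = (if t \<in> {-real k..real k} then F t else 0)" for k t
  have G_lim: "(\<lambda>k. G k t) \<longlonglongrightarrow> F t" for t
  proof (rule tendsto_eventually)
    show "eventually (\<lambda>k. G k t = F t) sequentially"
      using eventually_mem_symmetric_interval[of t] by (rule eventually_mono) (simp add: G_def)
  qed
  have norm_G: "(\<lambda>t. norm (G k t)) = (\<lambda>t. if t \<in> {-real k..real k} then norm (F t) else 0)" for k
    by (simp add: G_def fun_eq_iff)
  have "(\<lambda>t. norm (F t)) integrable_on UNIV"
  proof (rule conjunct1[OF monotone_convergence_increasing[where f = "\<lambda>k t. norm (G k t)"]])
    show "(\<lambda>t. norm (G k t)) integrable_on UNIV" for k
      using int[of k] unfolding norm_G integrable_restrict_UNIV absolutely_integrable_on_def by blast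
    show "norm (G k t) \<le> norm (G (Suc k) t)" for k t
      by (simp add: G_def)
    show "(\<lambda>k. norm (G k t)) \<longlonglongrightarrow> norm (F t)" for t
      using G_lim by (rule tendsto_norm)
    have "integral UNIV (\<lambda>t. norm (G k t)) = integral {-real k..real k} (\<lambda>t. norm (F t))" for k
      unfolding norm_G integral_restrict_UNIV ..
    moreover have "integral {-real k..real k} (\<lambda>t. norm (F t)) \<ge> 0" for k
      using int[of k] by (simp add: absolutely_integrable_on_def integral_nonneg)
    ultimately show "bounded (range (\<lambda>k. integral UNIV (\<lambda>t. norm (G k t))))"
      using bound unfolding bounded_iff by (intro exI[of _ B]) auto
  qed
  moreover have "F integrable_on UNIV"
  proof (rule dominated_convergence(1)[where f = G])
    show "G k integrable_on UNIV" for k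
      using int[of k] unfolding G_def absolutely_integrable_on_def integrable_restrict_UNIV by blast
    show "norm (G k t) \<le> norm (F t)" for k t
      by (simp add: G_def)
  qed (use calculation G_lim in auto)
  ultimately show ?thesis
    by (simp add: absolutely_integrable_on_def)
qed

lemma polynomial_decay_outside_interval:
  fixes \<phi> :: "real \<Rightarrow> 'a::real_normed_vector"
  assumes decay: "(1 + \<bar>t\<bar>) ^ M * norm (\<phi> t) \<le> B" and "t \<notin> {-real k..real k}"
  shows "norm (\<phi> t) \<le> B / (real k + 1) ^ M"
proof -
  have "(real k + 1) ^ M \<le> (1 + \<bar>t\<bar>) ^ M"
    using assms(2) by (intro power_mono) auto
  then have "norm (\<phi> t) * (real k + 1) ^ M \<le> B"
    using decay by (smt (verit) mult.commute mult_right_mono norm_ge_zero)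
  then show ?thesis
    by (rule pos_le_divide_eq[THEN iffD2, rotated]) simp
qed

lemma integral_norm_mult_le_split:
  fixes f \<phi> :: "'n::euclidean_space \<Rightarrow> complex"
  assumes "I \<subseteq> S" and f: "(\<lambda>t. norm (f t)) integrable_on S"
    and f_\<phi>: "(\<lambda>t. norm (f t * \<phi> t)) integrable_on I" "(\<lambda>t. norm (f t * \<phi> t)) integrable_on S"
    and outside: "\<And>t. t \<in> S - I \<Longrightarrow> norm (\<phi> t) \<le> w" and "0 \<le> w"
  shows "integral S (\<lambda>t. norm (f t * \<phi> t)) \<le> integral I (\<lambda>t. norm (f t * \<phi> t)) + w * integral S (\<lambda>t. norm (f t))"
proof -
  have "I \<inter> S = I"
    using assms(1) by blast
  then have inner: "(\<lambda>t. if t \<in> I then norm (f t * \<phi> t) else 0) integrable_on S"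
    unfolding integrable_restrict_Int by (rule ssubst) (rule f_\<phi>(1))
  have "norm (f t * \<phi> t) \<le> (if t \<in> I then norm (f t * \<phi> t) else 0) + w * norm (f t)" if "t \<in> S" for t
    using outside[of t] that \<open>0 \<le> w\<close> by (auto simp: norm_mult mult.commute intro: mult_right_mono)
  then have "integral S (\<lambda>t. norm (f t * \<phi> t))
               \<le> integral S (\<lambda>t. (if t \<in> I then norm (f t * \<phi> t) else 0) + w * norm (f t))"
    using inner f f_\<phi>(2) by (intro integral_le integrable_add integrable_on_mult_right) auto
  also have "\<dots> = integral S (\<lambda>t. if t \<in> I then norm (f t * \<phi> t) else 0) + integral S (\<lambda>t. w * norm (f t))"
    by (rule integral_add[OF inner integrable_on_mult_right[OF f]])
  also have "\<dots> = integral I (\<lambda>t. norm (f t * \<phi> t)) + w * integral S (\<lambda>t. norm (f t))"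
    unfolding integral_restrict_Int \<open>I \<inter> S = I\<close> integral_mult_right ..
  finally show ?thesis .
qed

lemma integral_norm_mult_shell_step:
  fixes f \<phi> :: "real \<Rightarrow> complex"
  assumes f: "\<And>a b. f absolutely_integrable_on {a..b}"
    and f_\<phi>: "\<And>a b. (\<lambda>t. f t * \<phi> t) absolutely_integrable_on {a..b}"
    and growth: "\<And>R. R > 0 \<Longrightarrow> integral {-R..R} (\<lambda>t. norm (f t)) \<le> C * (1 + R) ^ N"
    and decay: "\<And>t. (1 + \<bar>t\<bar>) ^ (N + 2) * norm (\<phi> t) \<le> B"
  shows "integral {-real (Suc k)..real (Suc k)} (\<lambda>t. norm (f t * \<phi> t))
           \<le> integral {-real k..real k} (\<lambda>t. norm (f t * \<phi> t)) + B * C * 2 ^ N / (real k + 1) ^ 2"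
proof -
  let ?S = "{-real (Suc k)..real (Suc k)}"
  define w where "w = B / (real k + 1) ^ (N + 2)"
  have "0 \<le> B"
    using decay[of 0] by (smt (verit) mult_nonneg_nonneg norm_ge_zero zero_le_power)
  then have "0 \<le> w"
    by (simp add: w_def)
  have int_norm_f: "(\<lambda>t. norm (f t)) integrable_on {a..b}" for a b
    using f[of a b] by (simp add: absolutely_integrable_on_def)
  have "0 \<le> C * 2 ^ N"
    using growth[of 1] integral_nonneg[OF int_norm_f, of "-1" 1] by simp
  then have "0 \<le> C"
    by (smt (verit) zero_le_mult_iff zero_less_power)
  have "integral ?S (\<lambda>t. norm (f t * \<phi> t))
          \<le> integral {-real k..real k} (\<lambda>t. norm (f t * \<phi> t)) + w * integral ?S (\<lambda>t. norm (f t))"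
  proof (rule integral_norm_mult_le_split)
    show "norm (\<phi> t) \<le> w" if "t \<in> ?S - {-real k..real k}" for t
      unfolding w_def using decay by (rule polynomial_decay_outside_interval) (use that in blast)
  qed (use f_\<phi> int_norm_f \<open>0 \<le> w\<close> in \<open>auto simp: absolutely_integrable_on_def\<close>)
  also have "integral ?S (\<lambda>t. norm (f t)) \<le> C * (2 * (real k + 1)) ^ N"
  proof -
    have "integral ?S (\<lambda>t. norm (f t)) \<le> C * (real k + 2) ^ N"
      using growth[of "real (Suc k)"] by (simp add: add_ac)
    also have "\<dots> \<le> C * (2 * (real k + 1)) ^ N"
      using \<open>0 \<le> C\<close> by (intro mult_left_mono power_mono) auto
    finally show ?thesis .
  qed
  then have "w * integral ?S (\<lambda>t. norm (f t)) \<le> w * (C * (2 * (real k + 1)) ^ N)"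
    using \<open>0 \<le> w\<close> by (rule mult_left_mono)
  also have "\<dots> = B * C * 2 ^ N / (real k + 1) ^ 2"
  proof -
    have calc: "B / q ^ (N + 2) * (C * (2 * q) ^ N) = B * C * 2 ^ N / q ^ 2" if "q > 0" for q :: real
      using that by (simp add: power_add power2_eq_square field_simps)
    show ?thesis
      unfolding w_def by (rule calc) simp
  qed
  finally show ?thesis
    by simp
qed

lemma sum_inverse_squares_le: "(\<Sum>j<k. 1 / (real j + 1) ^ 2) \<le> pi ^ 2 / 6"
proof -
  have "(\<lambda>j. 1 / (real j + 1) ^ 2) sums (pi ^ 2 / 6)"
    using inverse_squares_sums by (simp add: add.commute)
  then show ?thesis
    by (metis sums_summable sums_unique sum_le_suminf finite_lessThan zero_le_divide_1_iff zero_le_power2)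
qed

lemma absolutely_integrable_mult_Schwartz:
  fixes f \<phi> :: "real \<Rightarrow> complex"
  assumes f: "piecewise_cont f"
    and growth: "\<And>R. R > 0 \<Longrightarrow> integral {-R..R} (\<lambda>t. norm (f t)) \<le> C * (1 + R) ^ N"
    and \<phi>: "\<phi> \<in> Schwartz"
  shows "(\<lambda>t. f t * \<phi> t) absolutely_integrable_on UNIV"
proof -
  obtain B where decay: "\<And>t. (1 + \<bar>t\<bar>) ^ (N + 2) * norm (\<phi> t) \<le> B"
    using Schwartz_polynomial_decay[OF \<phi>, where M = "N + 2"] by blast
  have f_\<phi>: "(\<lambda>t. f t * \<phi> t) absolutely_integrable_on {a..b}" for a b
    by (intro piecewise_cont_absolutely_integrable_on_interval piecewise_cont_mult[OF f]
        continuous_imp_piecewise_cont Schwartz_isCont[OF \<phi>])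
  define K where "K = B * C * 2 ^ N"
  have partial_bound: "integral {-real k..real k} (\<lambda>t. norm (f t * \<phi> t)) \<le> K * (\<Sum>j<k. 1 / (real j + 1) ^ 2)"
    for k
  proof (induction k)
    case (Suc k)
    have "integral {-real (Suc k)..real (Suc k)} (\<lambda>t. norm (f t * \<phi> t))
            \<le> integral {-real k..real k} (\<lambda>t. norm (f t * \<phi> t)) + K / (real k + 1) ^ 2"
      unfolding K_def
      by (rule integral_norm_mult_shell_step[OF piecewise_cont_absolutely_integrable_on_interval[OF f]
            f_\<phi> growth decay])
    also have "\<dots> \<le> K * (\<Sum>j<k. 1 / (real j + 1) ^ 2) + K * (1 / (real k + 1) ^ 2)"
      using Suc.IH by simp
    also have "\<dots> = K * (\<Sum>j<Suc k. 1 / (real j + 1) ^ 2)"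
      by (simp add: distrib_left)
    finally show ?case .
  qed simp
  have "K * (\<Sum>j<k. 1 / (real j + 1) ^ 2) \<le> \<bar>K\<bar> * (pi ^ 2 / 6)" for k
    by (intro order.trans[OF mult_right_mono[OF abs_ge_self] mult_left_mono] sum_inverse_squares_le)
      (auto intro: sum_nonneg)
  then show ?thesis
    by (intro absolutely_integrable_on_UNIV_if_bounded_on_intervals f_\<phi> order.trans[OF partial_bound])
qed

lemma SG_absolutely_integrable_mult_Schwartz:
  assumes "f \<in> SG" and "\<phi> \<in> Schwartz"
  shows "(\<lambda>x. f x * \<phi> x) absolutely_integrable_on UNIV"
proof -
  obtain C N where "\<And>R. R > 0 \<Longrightarrow> integral {-R..R} (\<lambda>x. norm (f x)) \<le> C * (1 + R) ^ N"
    using assms(1) unfolding SG_def by blast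
  then show ?thesis
    using PC_bj_piecewise_cont[OF SG_PC_bj[OF assms(1)]] assms(2)
    by (intro absolutely_integrable_mult_Schwartz)
qed

section \<open>Gaussians\<close>

definition gaussian :: "real \<Rightarrow> real \<Rightarrow> real \<Rightarrow> real" where
  "gaussian a x t = exp (- (a * (t - x))\<^sup>2)"

lemma gaussian_pos [simp]: "0 < gaussian a x t"
  by (simp add: gaussian_def)

lemma borel_measurable_gaussian: "gaussian a x \<in> borel_measurable lebesgue"
  unfolding gaussian_def by (rule measurable_completion) measurable

lemma gaussian_le_exp_gaussian:
  assumes "1 \<le> a" and "0 \<le> d" and "d \<le> \<bar>t - x\<bar>"
  shows "gaussian a x t \<le> exp (- (a\<^sup>2 - 1) * d\<^sup>2) * gaussian 1 x t"
proof -
  have "d\<^sup>2 \<le> (t - x)\<^sup>2"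
    using power_mono[OF assms(3) assms(2), of 2] by simp
  moreover have "0 \<le> a\<^sup>2 - 1"
    using assms(1) by simp
  ultimately have "(a\<^sup>2 - 1) * d\<^sup>2 \<le> (a\<^sup>2 - 1) * (t - x)\<^sup>2"
    by (intro mult_left_mono)
  then have "- (a * (t - x))\<^sup>2 \<le> - (a\<^sup>2 - 1) * d\<^sup>2 + - (t - x)\<^sup>2"
    by (simp add: power_mult_distrib left_diff_distrib)
  then show ?thesis
    by (simp add: gaussian_def flip: exp_add)
qed

lemma has_real_derivative_poly_gaussian:
  "((\<lambda>t. poly p t * gaussian a x t) has_real_derivative
     poly (pderiv p + p * [:2 * a\<^sup>2 * x, - 2 * a\<^sup>2:]) t * gaussian a x t) (at t)"
proof -
  have "((\<lambda>t. poly p t * gaussian a x t) has_real_derivative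
     poly (pderiv p) t * gaussian a x t + poly p t * (gaussian a x t * (- (2 * (a * (t - x)) * a)))) (at t)"
    unfolding gaussian_def by (auto intro!: derivative_eq_intros poly_DERIV)
  then show ?thesis
    by (simp add: algebra_simps power2_eq_square)
qed

lemma nderiv_gaussian:
  "\<exists>p. nderiv n (\<lambda>t. complex_of_real (gaussian a x t)) = (\<lambda>t. complex_of_real (poly p t * gaussian a x t))"
proof (induction n)
  case 0
  show ?case
    by (intro exI[of _ 1]) simp
next
  case (Suc n)
  then obtain p where p: "nderiv n (\<lambda>t. complex_of_real (gaussian a x t))
                            = (\<lambda>t. complex_of_real (poly p t * gaussian a x t))" ..
  show ?case
    unfolding nderiv_Suc p
    by (intro exI[of _ "pderiv p + p * [:2 * a\<^sup>2 * x, - 2 * a\<^sup>2:]"] ext vector_derivative_at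
        has_vector_derivative_of_real has_real_derivative_poly_gaussian)
qed

lemma poly_gaussian_moment_tendsto_zero:
  assumes "a > 0" and "F = at_top \<or> F = at_bot"
  shows "((\<lambda>t. t ^ m * (poly p t * gaussian a x t)) \<longlongrightarrow> 0) F"
proof -
  have "((\<lambda>t. t ^ k * gaussian a x t) \<longlongrightarrow> 0) F" for k
    using assms unfolding gaussian_def by (elim disjE; simp; real_asymp)
  then have "((\<lambda>t. \<Sum>i\<le>degree p. coeff p i * (t ^ (m + i) * gaussian a x t)) \<longlongrightarrow> 0) F"
    by (intro tendsto_null_sum tendsto_mult_right_zero)
  then show ?thesis
    by (simp add: poly_altdef sum_distrib_left sum_distrib_right power_add algebra_simps)
qed

lemma gaussian_in_Schwartz:
  assumes "a > 0"
  shows "(\<lambda>t. complex_of_real (gaussian a x t)) \<in> Schwartz"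
  unfolding Schwartz_def
proof (intro CollectI conjI allI)
  fix n m :: nat and y :: real
  obtain p where p: "nderiv n (\<lambda>t. complex_of_real (gaussian a x t))
                      = (\<lambda>t. complex_of_real (poly p t * gaussian a x t))"
    using nderiv_gaussian by blast
  show "nderiv n (\<lambda>t. complex_of_real (gaussian a x t)) differentiable (at y)"
    unfolding p
    by (rule differentiableI_vector[OF has_vector_derivative_of_real[OF has_real_derivative_poly_gaussian]])
  have moment: "(\<lambda>t. complex_of_real (t ^ m) * nderiv n (\<lambda>t. complex_of_real (gaussian a x t)) t)
                  = (\<lambda>t. complex_of_real (t ^ m * (poly p t * gaussian a x t)))"
    unfolding p by simp
  show "((\<lambda>t. complex_of_real (t ^ m) * nderiv n (\<lambda>t. complex_of_real (gaussian a x t)) t) \<longlongrightarrow> 0) at_top"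
       "((\<lambda>t. complex_of_real (t ^ m) * nderiv n (\<lambda>t. complex_of_real (gaussian a x t)) t) \<longlongrightarrow> 0) at_bot"
    unfolding moment
    using tendsto_of_real[OF poly_gaussian_moment_tendsto_zero[OF assms], where 'a = complex] by auto
qed

section \<open>The Gaussian approximate identity\<close>

lemma has_bochner_integral_exp_neg_square_nonneg:
  "has_bochner_integral lebesgue (\<lambda>s::real. indicator {0..} s * exp (- s\<^sup>2)) (sqrt pi / 2)"
proof -
  have "has_bochner_integral lborel (\<lambda>s. indicator {0..} s * exp (- s\<^sup>2)) (sqrt pi / 2)"
    using gaussian_moment_0 by simp
  then show ?thesis
    by (simp add: has_bochner_integral_iff integrable_completion integral_completion)
qed

lemma has_bochner_integral_exp_neg_square_nonpos:
  "has_bochner_integral lebesgue (\<lambda>s::real. indicator {..0} s * exp (- s\<^sup>2)) (sqrt pi / 2)"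
  using has_bochner_integral_lebesgue_real_affine_iff[of "-1" "\<lambda>s. indicator {..0} s * exp (- s\<^sup>2)" _ 0]
    has_bochner_integral_exp_neg_square_nonneg
  by (simp add: indicator_def)

lemma borel_measurable_exp_neg_square: "(\<lambda>s::real. exp (- s\<^sup>2)) \<in> borel_measurable lebesgue"
  by (rule measurable_completion) measurable

lemma integrable_exp_neg_square: "integrable lebesgue (\<lambda>s::real. exp (- s\<^sup>2))"
proof -
  have "integrable lebesgue (\<lambda>s::real. indicator {0..} s * exp (- s\<^sup>2) + indicator {..0} s * exp (- s\<^sup>2))"
    using has_bochner_integral_add[OF has_bochner_integral_exp_neg_square_nonneg
        has_bochner_integral_exp_neg_square_nonpos]
    by (rule integrable.intros)
  then show ?thesis
    by (rule Bochner_Integration.integrable_bound) (auto simp: indicator_def borel_measurable_exp_neg_square)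
qed

lemma tendsto_shrinking_offset:
  fixes h :: "real \<Rightarrow> 'a::topological_space"
  assumes l: "(h \<longlongrightarrow> l) (at_left x)" and r: "(h \<longlongrightarrow> r) (at_right x)" and "s \<noteq> 0"
  shows "((\<lambda>a. h (x + s / a)) \<longlongrightarrow> (if s > 0 then r else l)) at_top"
proof -
  have lim: "((\<lambda>a. x + s / a) \<longlongrightarrow> x) at_top"
    by real_asymp
  have pos: "eventually (\<lambda>a. a > (0::real)) at_top"
    by (rule eventually_gt_at_top)
  show ?thesis
  proof (cases "s > 0")
    case True
    have "filterlim (\<lambda>a. x + s / a) (at_right x) at_top"
      using lim by (rule tendsto_imp_filterlim_at_right) (use pos in \<open>eventually_elim, simp add: True\<close>)
    with True show ?thesis
      using filterlim_compose[OF r] by simp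
  next
    case False
    with \<open>s \<noteq> 0\<close> have "s < 0"
      by simp
    have "filterlim (\<lambda>a. x + s / a) (at_left x) at_top"
      using lim by (rule tendsto_imp_filterlim_at_left)
        (use pos in \<open>eventually_elim, simp add: \<open>s < 0\<close> divide_neg_pos\<close>)
    with False show ?thesis
      using filterlim_compose[OF l] by simp
  qed
qed

lemma bounded_gaussian_approximate_identity:
  fixes h :: "real \<Rightarrow> 'a::euclidean_space"
  assumes h: "h \<in> borel_measurable lebesgue" and bound: "\<And>t. norm (h t) \<le> M"
    and l: "(h \<longlongrightarrow> l) (at_left x)" and r: "(h \<longlongrightarrow> r) (at_right x)"
  shows "((\<lambda>a. \<integral>s. exp (- s\<^sup>2) *\<^sub>R h (x + s / a) \<partial>lebesgue) \<longlongrightarrow> (sqrt pi / 2) *\<^sub>R (l + r)) at_top"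
proof -
  define P where "P s = (indicator {..0} s * exp (- s\<^sup>2)) *\<^sub>R l + (indicator {0..} s * exp (- s\<^sup>2)) *\<^sub>R r"
    for s :: real
  have P: "has_bochner_integral lebesgue P ((sqrt pi / 2) *\<^sub>R (l + r))"
    unfolding P_def scaleR_add_right
    by (intro has_bochner_integral_add has_bochner_integral_scaleR_left
        has_bochner_integral_exp_neg_square_nonpos has_bochner_integral_exp_neg_square_nonneg)
  have pointwise: "((\<lambda>a. exp (- s\<^sup>2) *\<^sub>R h (x + s / a)) \<longlongrightarrow> P s) at_top" if "s \<noteq> 0" for s
    using tendsto_scaleR[OF tendsto_const tendsto_shrinking_offset[OF l r that], of "exp (- s\<^sup>2)"] that
    by (simp add: P_def indicator_def split: if_splits)
  have "((\<lambda>a. \<integral>s. exp (- s\<^sup>2) *\<^sub>R h (x + s / a) \<partial>lebesgue) \<longlongrightarrow> integral\<^sup>L lebesgue P) at_top"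
  proof (rule integral_dominated_convergence_at_top[where w = "\<lambda>s. M * exp (- s\<^sup>2)"])
    show "P \<in> borel_measurable lebesgue"
      using P by (intro borel_measurable_integrable integrable.intros)
    show "(\<lambda>s. exp (- s\<^sup>2) *\<^sub>R h (x + s / a)) \<in> borel_measurable lebesgue" for a
    proof (rule borel_measurable_scaleR[OF borel_measurable_exp_neg_square])
      show "(\<lambda>s. h (x + s / a)) \<in> borel_measurable lebesgue"
        using borel_measurable_affine[OF h, of "1 / a" x] by (cases "a = 0") simp_all
    qed
    show "integrable lebesgue (\<lambda>s. M * exp (- s\<^sup>2))"
      using integrable_exp_neg_square by simp
    show "AE s in lebesgue. ((\<lambda>a. exp (- s\<^sup>2) *\<^sub>R h (x + s / a)) \<longlongrightarrow> P s) at_top"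
      using AE_completion[OF AE_lborel_singleton[of 0]] by eventually_elim (rule pointwise)
    show "\<forall>\<^sub>F a in at_top. AE s in lebesgue. norm (exp (- s\<^sup>2) *\<^sub>R h (x + s / a)) \<le> M * exp (- s\<^sup>2)"
      using bound by (intro always_eventually allI AE_I2) (simp add: mult.commute)
  qed
  then show ?thesis
    using has_bochner_integral_integral_eq[OF P] by simp
qed

lemma borel_measurable_if_gaussian_weighted_integrable:
  fixes h :: "real \<Rightarrow> 'a::euclidean_space"
  assumes "integrable lebesgue (\<lambda>t. gaussian 1 x t *\<^sub>R h t)"
  shows "h \<in> borel_measurable lebesgue"
proof -
  have "(\<lambda>t. inverse (gaussian 1 x t)) \<in> borel_measurable lebesgue"
    using borel_measurable_gaussian by (rule borel_measurable_inverse)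
  moreover have "(\<lambda>t. gaussian 1 x t *\<^sub>R h t) \<in> borel_measurable lebesgue"
    using assms by (rule borel_measurable_integrable)
  ultimately have "(\<lambda>t. inverse (gaussian 1 x t) *\<^sub>R (gaussian 1 x t *\<^sub>R h t)) \<in> borel_measurable lebesgue"
    by (rule borel_measurable_scaleR)
  then show ?thesis
    by (simp add: gaussian_def)
qed

lemma integrable_gaussian_weighted:
  fixes h :: "real \<Rightarrow> 'a::euclidean_space"
  assumes int: "integrable lebesgue (\<lambda>t. gaussian 1 x t *\<^sub>R h t)" and "1 \<le> a"
  shows "integrable lebesgue (\<lambda>t. gaussian a x t *\<^sub>R h t)"
  using int
proof (rule Bochner_Integration.integrable_bound)
  show "(\<lambda>t. gaussian a x t *\<^sub>R h t) \<in> borel_measurable lebesgue"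
    using borel_measurable_gaussian borel_measurable_if_gaussian_weighted_integrable[OF int]
    by (rule borel_measurable_scaleR)
  show "AE t in lebesgue. norm (gaussian a x t *\<^sub>R h t) \<le> norm (gaussian 1 x t *\<^sub>R h t)"
    using gaussian_le_exp_gaussian[OF \<open>1 \<le> a\<close> order.refl, of t x for t]
    by (intro AE_I2) (simp add: gaussian_def mult_right_mono)
qed

lemma integral_gaussian_weighted_rescale:
  fixes h :: "real \<Rightarrow> 'a::euclidean_space"
  assumes "a > 0"
  shows "a *\<^sub>R (\<integral>t. gaussian a x t *\<^sub>R h t \<partial>lebesgue) = (\<integral>s. exp (- s\<^sup>2) *\<^sub>R h (x + s / a) \<partial>lebesgue)"
proof -
  have "(\<integral>t. gaussian a x t *\<^sub>R h t \<partial>lebesgue)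
          = \<bar>1 / a\<bar> *\<^sub>R (\<integral>s. gaussian a x (x + 1 / a * s) *\<^sub>R h (x + 1 / a * s) \<partial>lebesgue)"
    using assms by (intro lebesgue_integral_real_affine) simp
  also have "(\<lambda>s. gaussian a x (x + 1 / a * s) *\<^sub>R h (x + 1 / a * s)) = (\<lambda>s. exp (- s\<^sup>2) *\<^sub>R h (x + s / a))"
    using assms by (simp add: gaussian_def)
  finally show ?thesis
    using assms by simp
qed

lemma gaussian_weighted_far_part_tendsto_zero:
  fixes h :: "real \<Rightarrow> 'a::euclidean_space"
  assumes int: "integrable lebesgue (\<lambda>t. gaussian 1 x t *\<^sub>R h t)" and "d > 0"
  shows "((\<lambda>a. a *\<^sub>R (\<integral>t. gaussian a x t *\<^sub>R (indicator (- ball x d) t *\<^sub>R h t) \<partial>lebesgue)) \<longlongrightarrow> 0) at_top"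
proof (rule Lim_null_comparison)
  define K where "K = (\<integral>t. norm (gaussian 1 x t *\<^sub>R h t) \<partial>lebesgue)"
  have far_bound: "norm (\<integral>t. gaussian a x t *\<^sub>R (indicator (- ball x d) t *\<^sub>R h t) \<partial>lebesgue)
                     \<le> exp (- (a\<^sup>2 - 1) * d\<^sup>2) * K" if "1 \<le> a" for a
  proof -
    have "integrable lebesgue (\<lambda>t. gaussian a x t *\<^sub>R (indicator (- ball x d) t *\<^sub>R h t))"
      using integrable_mult_indicator[OF _ integrable_gaussian_weighted[OF int that], of "- ball x d"]
      by (simp add: mult.commute)
    moreover have "norm (gaussian a x t *\<^sub>R (indicator (- ball x d) t *\<^sub>R h t))
                     \<le> exp (- (a\<^sup>2 - 1) * d\<^sup>2) * norm (gaussian 1 x t *\<^sub>R h t)" for t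
    proof (cases "t \<in> ball x d")
      case False
      then have "d \<le> \<bar>t - x\<bar>"
        by (simp add: dist_real_def abs_minus_commute)
      then have "gaussian a x t * norm (h t) \<le> exp (- (a\<^sup>2 - 1) * d\<^sup>2) * gaussian 1 x t * norm (h t)"
        using gaussian_le_exp_gaussian[OF that] \<open>d > 0\<close> by (simp add: mult_right_mono)
      then show ?thesis
        using False by (simp add: abs_of_pos mult.assoc)
    qed simp
    ultimately have "norm (\<integral>t. gaussian a x t *\<^sub>R (indicator (- ball x d) t *\<^sub>R h t) \<partial>lebesgue)
        \<le> (\<integral>t. exp (- (a\<^sup>2 - 1) * d\<^sup>2) * norm (gaussian 1 x t *\<^sub>R h t) \<partial>lebesgue)"
      using integrable_norm[OF int] by (intro Bochner_Integration.integral_norm_bound_integral integrable_mult_right) auto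
    then show ?thesis
      by (simp add: K_def)
  qed
  show "eventually (\<lambda>a. norm (a *\<^sub>R (\<integral>t. gaussian a x t *\<^sub>R (indicator (- ball x d) t *\<^sub>R h t) \<partial>lebesgue))
          \<le> a * exp (- (a\<^sup>2 - 1) * d\<^sup>2) * K) at_top"
    using eventually_ge_at_top[of "1::real"]
    by eventually_elim (use far_bound in \<open>simp add: mult.assoc mult_left_mono\<close>)
  have "((\<lambda>a. a * exp (- (a\<^sup>2 - 1) * d\<^sup>2)) \<longlongrightarrow> 0) at_top"
    using \<open>d > 0\<close> by real_asymp
  then show "((\<lambda>a. a * exp (- (a\<^sup>2 - 1) * d\<^sup>2) * K) \<longlongrightarrow> 0) at_top"
    by (rule tendsto_mult_left_zero)
qed

lemma integral_gaussian_weighted_indicator_split: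
  fixes h :: "real \<Rightarrow> 'a::euclidean_space"
  assumes int: "integrable lebesgue (\<lambda>t. gaussian 1 x t *\<^sub>R h t)" and "1 \<le> a" and S: "S \<in> sets lebesgue"
  shows "(\<integral>t. gaussian a x t *\<^sub>R h t \<partial>lebesgue)
           = (\<integral>t. gaussian a x t *\<^sub>R (indicator S t *\<^sub>R h t) \<partial>lebesgue)
             + (\<integral>t. gaussian a x t *\<^sub>R (indicator (- S) t *\<^sub>R h t) \<partial>lebesgue)"
proof -
  have "integrable lebesgue (\<lambda>t. gaussian a x t *\<^sub>R (indicator T t *\<^sub>R h t))" if "T \<in> sets lebesgue" for T
    using integrable_mult_indicator[OF that integrable_gaussian_weighted[OF int \<open>1 \<le> a\<close>]]
    by (simp add: mult.commute)
  moreover have "- S \<in> sets lebesgue"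
    using sets.compl_sets[OF S] by (simp add: Compl_eq_Diff_UNIV)
  moreover have "gaussian a x t *\<^sub>R h t
                   = gaussian a x t *\<^sub>R (indicator S t *\<^sub>R h t) + gaussian a x t *\<^sub>R (indicator (- S) t *\<^sub>R h t)" for t
    by (simp add: indicator_def)
  ultimately show ?thesis
    using S by simp
qed

lemma gaussian_approximate_identity:
  fixes h :: "real \<Rightarrow> 'a::euclidean_space"
  assumes int: "integrable lebesgue (\<lambda>t. gaussian 1 x t *\<^sub>R h t)"
    and l: "(h \<longlongrightarrow> l) (at_left x)" and r: "(h \<longlongrightarrow> r) (at_right x)"
  shows "((\<lambda>a. a *\<^sub>R (\<integral>t. gaussian a x t *\<^sub>R h t \<partial>lebesgue)) \<longlongrightarrow> (sqrt pi / 2) *\<^sub>R (l + r)) at_top"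
proof -
  obtain d B where "d > 0" and B: "\<And>t. t \<in> ball x d \<Longrightarrow> norm (h t) \<le> B"
    using one_sided_limits_imp_bounded_near[OF l r] by blast
  define near where "near t = indicator (ball x d) t *\<^sub>R h t" for t
  define far where "far t = indicator (- ball x d) t *\<^sub>R h t" for t
  have "eventually (\<lambda>t. near t = h t) (at x within A)" for A
    using eventually_at_ball[OF \<open>d > 0\<close>] by (rule eventually_mono) (simp add: near_def)
  then have near_l: "(near \<longlongrightarrow> l) (at_left x)" and near_r: "(near \<longlongrightarrow> r) (at_right x)"
    using l r by (auto intro: Lim_transform_eventually eventually_mono simp: eq_commute)
  have near_meas: "near \<in> borel_measurable lebesgue"
    unfolding near_def using borel_measurable_if_gaussian_weighted_integrable[OF int]
    by (intro borel_measurable_scaleR borel_measurable_indicator) auto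
  have near_bound: "norm (near t) \<le> max B 0" for t
    using B[of t] by (auto simp: near_def indicator_def le_max_iff_disj)
  have "((\<lambda>a. \<integral>s. exp (- s\<^sup>2) *\<^sub>R near (x + s / a) \<partial>lebesgue) \<longlongrightarrow> (sqrt pi / 2) *\<^sub>R (l + r)) at_top"
    using near_meas near_bound near_l near_r by (rule bounded_gaussian_approximate_identity)
  then have near_lim: "((\<lambda>a. a *\<^sub>R (\<integral>t. gaussian a x t *\<^sub>R near t \<partial>lebesgue)) \<longlongrightarrow> (sqrt pi / 2) *\<^sub>R (l + r)) at_top"
    using eventually_gt_at_top[of 0]
    by (rule Lim_transform_eventually[OF _ eventually_mono]) (simp add: integral_gaussian_weighted_rescale)
  have far_lim: "((\<lambda>a. a *\<^sub>R (\<integral>t. gaussian a x t *\<^sub>R far t \<partial>lebesgue)) \<longlongrightarrow> 0) at_top"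
    unfolding far_def using int \<open>d > 0\<close> by (rule gaussian_weighted_far_part_tendsto_zero)
  have split: "a *\<^sub>R (\<integral>t. gaussian a x t *\<^sub>R near t \<partial>lebesgue) + a *\<^sub>R (\<integral>t. gaussian a x t *\<^sub>R far t \<partial>lebesgue)
                 = a *\<^sub>R (\<integral>t. gaussian a x t *\<^sub>R h t \<partial>lebesgue)" if "1 \<le> a" for a
    using integral_gaussian_weighted_indicator_split[OF int that, of "ball x d"]
    by (simp add: near_def far_def scaleR_add_right)
  have "eventually (\<lambda>a. a *\<^sub>R (\<integral>t. gaussian a x t *\<^sub>R near t \<partial>lebesgue) + a *\<^sub>R (\<integral>t. gaussian a x t *\<^sub>R far t \<partial>lebesgue)
          = a *\<^sub>R (\<integral>t. gaussian a x t *\<^sub>R h t \<partial>lebesgue)) at_top"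
    using eventually_ge_at_top[of 1] by eventually_elim (rule split)
  from Lim_transform_eventually[OF tendsto_add[OF near_lim far_lim] this] show ?thesis
    by simp
qed

lemma gaussian_integrals_vanish_imp_jumps_cancel:
  fixes h :: "real \<Rightarrow> 'a::euclidean_space"
  assumes "integrable lebesgue (\<lambda>t. gaussian 1 x t *\<^sub>R h t)"
    and "\<And>a. a > 0 \<Longrightarrow> (\<integral>t. gaussian a x t *\<^sub>R h t \<partial>lebesgue) = 0"
    and "(h \<longlongrightarrow> l) (at_left x)" and "(h \<longlongrightarrow> r) (at_right x)"
  shows "l + r = 0"
proof -
  have "((\<lambda>a. a *\<^sub>R (\<integral>t. gaussian a x t *\<^sub>R h t \<partial>lebesgue)) \<longlongrightarrow> 0) at_top"
    using eventually_gt_at_top[of 0] by (rule tendsto_eventually[OF eventually_mono]) (simp add: assms(2))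
  with gaussian_approximate_identity[OF assms(1,3,4)] have "(sqrt pi / 2) *\<^sub>R (l + r) = 0"
    by (rule tendsto_unique[OF trivial_limit_at_top_linorder])
  then show ?thesis
    by simp
qed

section \<open>Separation\<close>

lemma SG_gaussian_weighted:
  assumes "f \<in> SG" and "a > 0"
  shows "integrable lebesgue (\<lambda>t. gaussian a x t *\<^sub>R f t)"
    and "(\<integral>t. gaussian a x t *\<^sub>R f t \<partial>lebesgue) = integral UNIV (\<lambda>t. f t * complex_of_real (gaussian a x t))"
proof -
  have "(\<lambda>t. gaussian a x t *\<^sub>R f t) = (\<lambda>t. f t * complex_of_real (gaussian a x t))"
    by (simp add: scaleR_conv_of_real mult.commute)
  moreover have "integrable lebesgue (\<lambda>t. f t * complex_of_real (gaussian a x t))"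
    using SG_absolutely_integrable_mult_Schwartz[OF assms(1) gaussian_in_Schwartz[OF assms(2)]]
    by (simp add: set_integrable_def)
  ultimately show "integrable lebesgue (\<lambda>t. gaussian a x t *\<^sub>R f t)"
    and "(\<integral>t. gaussian a x t *\<^sub>R f t \<partial>lebesgue) = integral UNIV (\<lambda>t. f t * complex_of_real (gaussian a x t))"
    by (simp_all add: integral_lebesgue)
qed

lemma SG_eq_if_Schwartz_integrals_eq:
  assumes f: "f \<in> SG" and g: "g \<in> SG"
    and eq: "\<And>\<phi>. \<phi> \<in> Schwartz \<Longrightarrow> integral UNIV (\<lambda>x. f x * \<phi> x) = integral UNIV (\<lambda>x. g x * \<phi> x)"
  shows "f x = g x"
proof -
  obtain lf rf where f_lim: "(f \<longlongrightarrow> lf) (at_left x)" "(f \<longlongrightarrow> rf) (at_right x)"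
    using piecewise_cont_one_sided_limits[OF PC_bj_piecewise_cont[OF SG_PC_bj[OF f]]] by blast
  obtain lg rg where g_lim: "(g \<longlongrightarrow> lg) (at_left x)" "(g \<longlongrightarrow> rg) (at_right x)"
    using piecewise_cont_one_sided_limits[OF PC_bj_piecewise_cont[OF SG_PC_bj[OF g]]] by blast
  have "(lf - lg) + (rf - rg) = 0"
  proof (rule gaussian_integrals_vanish_imp_jumps_cancel[where h = "\<lambda>t. f t - g t"])
    show "integrable lebesgue (\<lambda>t. gaussian 1 x t *\<^sub>R (f t - g t))"
      using SG_gaussian_weighted(1)[OF f, of 1] SG_gaussian_weighted(1)[OF g, of 1]
      by (simp add: scaleR_diff_right)
    show "(\<integral>t. gaussian a x t *\<^sub>R (f t - g t) \<partial>lebesgue) = 0" if "a > 0" for a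
      using SG_gaussian_weighted[OF f that] SG_gaussian_weighted[OF g that]
        eq[OF gaussian_in_Schwartz[OF that, of x]]
      by (simp add: scaleR_diff_right)
  qed (use f_lim g_lim in \<open>auto intro: tendsto_diff\<close>)
  moreover have "f x - g x = ((lf - lg) + (rf - rg)) / 2"
    using PC_bj_value[OF SG_PC_bj[OF f] f_lim] PC_bj_value[OF SG_PC_bj[OF g] g_lim]
    by (simp add: diff_divide_distrib)
  ultimately show ?thesis
    by simp
qed

theorem mainTheorem3:
  shows "(\<forall>f\<in>SG. \<forall>\<phi>\<in>Schwartz.
            piecewise_cont (\<lambda>x. f x * \<phi> x) \<and>
            (\<lambda>x. f x * \<phi> x) absolutely_integrable_on UNIV)
       \<and> (\<forall>f\<in>SG. \<forall>g\<in>SG.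
            (\<forall>\<phi>\<in>Schwartz. integral UNIV (\<lambda>x. f x * \<phi> x) = integral UNIV (\<lambda>x. g x * \<phi> x))
            \<longrightarrow> (\<forall>x. f x = g x))"
proof (intro conjI ballI allI impI)
  fix f \<phi> assume f: "f \<in> SG" and \<phi>: "\<phi> \<in> Schwartz"
  show "piecewise_cont (\<lambda>x. f x * \<phi> x)"
    using PC_bj_piecewise_cont[OF SG_PC_bj[OF f]] continuous_imp_piecewise_cont[OF Schwartz_isCont[OF \<phi>]]
    by (rule piecewise_cont_mult)
  show "(\<lambda>x. f x * \<phi> x) absolutely_integrable_on UNIV"
    using f \<phi> by (rule SG_absolutely_integrable_mult_Schwartz)
next
  fix f g x
  assume f: "f \<in> SG" and g: "g \<in> SG"
    and eq: "\<forall>\<phi>\<in>Schwartz. integral UNIV (\<lambda>x. f x * \<phi> x) = integral UNIV (\<lambda>x. g x * \<phi> x)"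
  show "f x = g x"
    by (rule SG_eq_if_Schwartz_integrals_eq[OF f g]) (use eq in blast)
qed

end
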